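(* Let $\gamma$ be an analytic split-Fourier curve, $\gamma(\theta)=(\gamma_1+k'\gamma_2,\gamma_3)=\big(\sum_{n=-\infty}^{\infty}c_ne^{k'n\theta},\sum_{n=-\infty}^{\infty}d_ne^{k'n\theta}\big)$. Then the coefficients $c_n$ and $d_n$ are uniquely determined by $\gamma$.
   Context: $\mathbb{C}'$ denotes the split-complex numbers $x+k'y$, $k'^2=1$, and $e^{k'\theta}=\cosh\theta+k'\sinh\theta$. $\mathbb{L}^3$ ($\mathbb{R}^3$ with metric $-dx^2+dy^2+dz^2$) is identified with $\mathbb{C}'\times\mathbb{R}$ via $(x,y,z)\leftrightarrow(x+k'y,z)$. A curve $\gamma:\mathbb{H}^1\to\mathbb{L}^3$ (with $\mathbb{H}^1=\{e^{k'\theta}:\theta\in\mathbb{R}\}$, parametrized by $\theta$) is a split-Fourier curve if it has an expansion $\gamma(\theta)=\big(\sum_n c_ne^{k'n\theta},\sum_n d_ne^{k'n\theta}\big)$ with $c_n,d_n\in\mathbb{C}'$, only finitely many nonzero, and with $\gamma_3=\sum_nd_ne^{k'n\theta}$ real-valued. Analytic means each component is locally given by a convergent power series. *)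

theory Defs
  imports "HOL-Analysis.Analysis"
begin

text \<open>Split-complex numbers x + k'y (k'^2 = 1) are represented as pairs (x, y) of reals,
  with componentwise addition (the library's product-type addition) and the multiplication below.\<close>

type_synonym splitc = "real \<times> real"

definition splitc_mult :: "splitc \<Rightarrow> splitc \<Rightarrow> splitc" where
  "splitc_mult z w = (fst z * fst w + snd z * snd w, fst z * snd w + snd z * fst w)"

text \<open>e^{k' t} = cosh t + k' sinh t\<close>
definition splitc_exp :: "real \<Rightarrow> splitc" where
  "splitc_exp t = (cosh t, sinh t)"

definition split_fourier_sum :: "(int \<Rightarrow> splitc) \<Rightarrow> real \<Rightarrow> splitc" where
  "split_fourier_sum c \<theta> = (\<Sum>n\<in>{n. c n \<noteq> 0}. splitc_mult (c n) (splitc_exp (of_int n * \<theta>)))"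

text \<open>A curve in L^3 = C' x R, parametrized by \<theta>: \<gamma> \<theta> = ((\<gamma>1 \<theta>, \<gamma>2 \<theta>), \<gamma>3 \<theta>).
  (c, d) is a split-Fourier expansion of \<gamma>: finitely many nonzero coefficients,
  first component equals \<Sum> c_n e^{k'n\<theta>}, and \<Sum> d_n e^{k'n\<theta>} equals the real number \<gamma>3 \<theta>.\<close>
definition split_fourier_expansion ::
    "(real \<Rightarrow> splitc \<times> real) \<Rightarrow> (int \<Rightarrow> splitc) \<Rightarrow> (int \<Rightarrow> splitc) \<Rightarrow> bool" where
  "split_fourier_expansion \<gamma> c d \<longleftrightarrow>
     finite {n. c n \<noteq> 0} \<and> finite {n. d n \<noteq> 0} \<and>
     (\<forall>\<theta>. fst (\<gamma> \<theta>) = split_fourier_sum c \<theta>) \<and>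
     (\<forall>\<theta>. split_fourier_sum d \<theta> = (snd (\<gamma> \<theta>), 0))"

definition split_fourier_curve :: "(real \<Rightarrow> splitc \<times> real) \<Rightarrow> bool" where
  "split_fourier_curve \<gamma> \<longleftrightarrow> (\<exists>c d. split_fourier_expansion \<gamma> c d)"

definition real_analytic :: "(real \<Rightarrow> real) \<Rightarrow> bool" where
  "real_analytic f \<longleftrightarrow> (\<forall>x. \<exists>r>0. \<exists>a::nat \<Rightarrow> real.
      \<forall>y. \<bar>y - x\<bar> < r \<longrightarrow> (\<lambda>k. a k * (y - x) ^ k) sums f y)"

definition analytic_curve :: "(real \<Rightarrow> splitc \<times> real) \<Rightarrow> bool" where
  "analytic_curve \<gamma> \<longleftrightarrow> real_analytic (\<lambda>\<theta>. fst (fst (\<gamma> \<theta>))) \<and>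
     real_analytic (\<lambda>\<theta>. snd (fst (\<gamma> \<theta>))) \<and> real_analytic (\<lambda>\<theta>. snd (\<gamma> \<theta>))"

end

theory Submission
  imports Defs
begin

text \<open>In light-cone coordinates \<open>(x + y, x - y)\<close> split-complex multiplication is
  componentwise and \<open>e^(k't)\<close> becomes \<open>(e^t, e^(-t))\<close>. A split-Fourier sum thus splits into
  the two real exponential sums \<open>\<Sum> u_n e^(n\<theta>)\<close> and \<open>\<Sum> v_n e^(-n\<theta>)\<close>, so uniqueness
  reduces to the linear independence of the functions \<open>e^(a\<theta>)\<close> for distinct real \<open>a\<close>:
  dividing by the fastest growing term and letting \<open>\<theta> \<rightarrow> \<infinity>\<close> isolates its coefficient.\<close>

lemma tendsto_exp_mult_at_top_0:
  fixes a :: real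
  assumes "a < 0"
  shows "((\<lambda>t. exp (a * t)) \<longlongrightarrow> 0) at_top"
proof -
  have "filterlim (\<lambda>t. a * t) at_bot at_top"
    using assms by (intro filterlim_tendsto_neg_mult_at_bot[OF tendsto_const]) (auto simp: filterlim_ident)
  then show ?thesis
    using exp_at_bot filterlim_compose by blast
qed

lemma exp_sum_eq_0_imp_coeffs_eq_0:
  fixes S :: "real set" and p :: "real \<Rightarrow> real"
  assumes "finite S" and "\<And>\<theta>. (\<Sum>a\<in>S. p a * exp (a * \<theta>)) = 0"
  shows "\<forall>a\<in>S. p a = 0"
  using assms
proof (induction S rule: finite_remove_induct)
  case empty
  then show ?case by simp
next
  case (remove S)
  define M where "M = Max S"
  have "M \<in> S"
    using remove.hyps by (simp add: M_def)
  have sum_split: "(\<Sum>a\<in>S. p a * exp (a * \<theta>)) = p M * exp (M * \<theta>) + (\<Sum>a\<in>S - {M}. p a * exp (a * \<theta>))"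
    for \<theta>
    using remove.hyps(1) \<open>M \<in> S\<close> by (simp add: sum.remove)
  have scaled: "p M + (\<Sum>a\<in>S - {M}. p a * exp ((a - M) * \<theta>)) = 0" for \<theta>
  proof -
    have "p M + (\<Sum>a\<in>S - {M}. p a * exp ((a - M) * \<theta>)) = exp (- M * \<theta>) * (\<Sum>a\<in>S. p a * exp (a * \<theta>))"
      unfolding sum_split by (simp add: sum_distrib_left algebra_simps flip: exp_add)
    then show ?thesis
      using remove.prems by simp
  qed
  have "((\<lambda>\<theta>. p M + (\<Sum>a\<in>S - {M}. p a * exp ((a - M) * \<theta>))) \<longlongrightarrow> p M + (\<Sum>a\<in>S - {M}. p a * 0)) at_top"
  proof (intro tendsto_intros tendsto_exp_mult_at_top_0)
    show "a - M < 0" if "a \<in> S - {M}" for a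
      using that remove.hyps(1) by (auto simp: M_def order_less_le)
  qed
  then have "p M = 0"
    unfolding scaled by (simp add: tendsto_const_iff)
  moreover have "\<forall>a\<in>S - {M}. p a = 0"
    using remove.IH[OF \<open>M \<in> S\<close>] remove.prems sum_split \<open>p M = 0\<close> by simp
  ultimately show ?case by blast
qed

lemma int_exp_sum_unique:
  fixes p q :: "int \<Rightarrow> real"
  assumes "finite A" and "\<And>\<theta>. (\<Sum>n\<in>A. p n * exp (of_int n * \<theta>)) = (\<Sum>n\<in>A. q n * exp (of_int n * \<theta>))"
    and "n \<in> A"
  shows "p n = q n"
proof -
  let ?r = "\<lambda>a::real. p \<lfloor>a\<rfloor> - q \<lfloor>a\<rfloor>"
  have "(\<Sum>a\<in>of_int ` A. ?r a * exp (a * \<theta>)) = 0" for \<theta>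
    using assms(2)[of \<theta>] by (simp add: sum.reindex inj_on_def left_diff_distrib sum_subtractf)
  then have "\<forall>a\<in>of_int ` A. ?r a = 0"
    using assms(1) by (intro exp_sum_eq_0_imp_coeffs_eq_0) auto
  then show ?thesis
    using assms(3) by force
qed

definition light_cone :: "splitc \<Rightarrow> real \<times> real" where
  "light_cone z = (fst z + snd z, fst z - snd z)"

lemma light_cone_inject: "light_cone z = light_cone w \<longleftrightarrow> z = w"
  by (auto simp: light_cone_def prod_eq_iff)

lemma light_cone_mult:
  "light_cone (splitc_mult z w) =
     (fst (light_cone z) * fst (light_cone w), snd (light_cone z) * snd (light_cone w))"
  by (simp add: light_cone_def splitc_mult_def algebra_simps)

lemma light_cone_exp: "light_cone (splitc_exp t) = (exp t, exp (- t))"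
  by (simp add: light_cone_def splitc_exp_def flip: cosh_plus_sinh cosh_minus_sinh)

lemma light_cone_sum: "light_cone (\<Sum>i\<in>A. f i) = (\<Sum>i\<in>A. light_cone (f i))"
  by (simp add: light_cone_def fst_sum snd_sum sum.distrib sum_subtractf prod_eq_iff)

lemma split_fourier_sum_superset:
  assumes "finite A" and "{n. c n \<noteq> 0} \<subseteq> A"
  shows "split_fourier_sum c \<theta> = (\<Sum>n\<in>A. splitc_mult (c n) (splitc_exp (of_int n * \<theta>)))"
  unfolding split_fourier_sum_def
  by (rule sum.mono_neutral_left) (use assms in \<open>auto simp: splitc_mult_def prod_eq_iff\<close>)

lemma light_cone_split_fourier_sum:
  assumes "finite A" and "{n. c n \<noteq> 0} \<subseteq> A"
  shows "light_cone (split_fourier_sum c \<theta>) =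
    ((\<Sum>n\<in>A. fst (light_cone (c n)) * exp (of_int n * \<theta>)),
     (\<Sum>n\<in>A. snd (light_cone (c n)) * exp (of_int n * - \<theta>)))"
  by (simp add: split_fourier_sum_superset[OF assms] light_cone_sum light_cone_mult light_cone_exp
      fst_sum snd_sum prod_eq_iff)

lemma split_fourier_sum_unique:
  assumes "finite {n. c n \<noteq> 0}" and "finite {n. c' n \<noteq> 0}"
    and "\<And>\<theta>. split_fourier_sum c \<theta> = split_fourier_sum c' \<theta>"
  shows "c = c'"
proof
  fix n
  define A where "A = {n. c n \<noteq> 0} \<union> {n. c' n \<noteq> 0}"
  have "finite A"
    using assms(1,2) by (simp add: A_def)
  have cone_c: "light_cone (split_fourier_sum c \<theta>) =
      ((\<Sum>n\<in>A. fst (light_cone (c n)) * exp (of_int n * \<theta>)),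
       (\<Sum>n\<in>A. snd (light_cone (c n)) * exp (of_int n * - \<theta>)))"
    and cone_c': "light_cone (split_fourier_sum c' \<theta>) =
      ((\<Sum>n\<in>A. fst (light_cone (c' n)) * exp (of_int n * \<theta>)),
       (\<Sum>n\<in>A. snd (light_cone (c' n)) * exp (of_int n * - \<theta>)))" for \<theta>
    by (rule light_cone_split_fourier_sum[OF \<open>finite A\<close>]; auto simp: A_def)+
  have fst_eq: "(\<Sum>n\<in>A. fst (light_cone (c n)) * exp (of_int n * \<theta>)) =
      (\<Sum>n\<in>A. fst (light_cone (c' n)) * exp (of_int n * \<theta>))" for \<theta>
    using arg_cong[OF assms(3)[of \<theta>], of "\<lambda>z. fst (light_cone z)"] by (simp add: cone_c cone_c')
  have snd_eq: "(\<Sum>n\<in>A. snd (light_cone (c n)) * exp (of_int n * \<theta>)) =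
      (\<Sum>n\<in>A. snd (light_cone (c' n)) * exp (of_int n * \<theta>))" for \<theta>
    using arg_cong[OF assms(3)[of "- \<theta>"], of "\<lambda>z. snd (light_cone z)"] by (simp add: cone_c cone_c')
  show "c n = c' n"
  proof (cases "n \<in> A")
    case True
    have "fst (light_cone (c n)) = fst (light_cone (c' n))"
      using fst_eq by (rule int_exp_sum_unique[OF \<open>finite A\<close> _ True])
    moreover have "snd (light_cone (c n)) = snd (light_cone (c' n))"
      using snd_eq by (rule int_exp_sum_unique[OF \<open>finite A\<close> _ True])
    ultimately show ?thesis
      by (metis light_cone_inject prod_eq_iff)
  next
    case False
    then show ?thesis by (simp add: A_def)
  qed
qed

theorem theorem5p1:
  fixes \<gamma> :: "real \<Rightarrow> splitc \<times> real"
  assumes "analytic_curve \<gamma>"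
    and "split_fourier_curve \<gamma>"
    and "split_fourier_expansion \<gamma> c d"
    and "split_fourier_expansion \<gamma> c' d'"
  shows "c = c' \<and> d = d'"
proof
  show "c = c'"
    using assms(3,4) unfolding split_fourier_expansion_def by (intro split_fourier_sum_unique) auto
  show "d = d'"
    using assms(3,4) unfolding split_fourier_expansion_def by (intro split_fourier_sum_unique) auto
qed

end
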